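(* In the curved-exam game described in the context, there exists a no-curve pure Nash equilibrium in which every student $i$ plays $y_i^*=\alpha_i$ if and only if $$\bar\alpha:=\frac1n\sum_{i=1}^n\alpha_i\ \ge\ \frac1n\max_{1\le i\le n}\big[(n-1)J_i(\alpha_i,n,m)+\alpha_i\big].$$ Moreover, if $m\in(0,1)$ is fixed and $(\alpha_i)_{i\ge1}$ is any sequence in $(0,1)$, then $\frac1n\max_{1\le i\le n}\big[(n-1)J_i(\alpha_i,n,m)+\alpha_i\big]\to m$ as $n\to\infty$.
   Context: The curved-exam game: fix $n\ge2$, abilities $\alpha_1,\dots,\alpha_n\in(0,1)$, target mean $m\in(0,1)$. Student $i$ chooses $x_i\in[0,1]$; $\bar x=\frac1n\sum_j x_j$, $\bar x_{-i}=\frac1{n-1}\sum_{j\ne i}x_j$. Grade $G_i(x)=x_i+\max(m-\bar x,0)$ (not truncated at 1); payoff $U_i(x)=G_i(x)^{\alpha_i}(1-x_i)^{1-\alpha_i}$. A no-curve equilibrium is a pure Nash equilibrium with $\bar x\ge m$. For each $i$, $J_i=J_i(\alpha_i,n,m)$ denotes the unique zero in $\big[\frac{nm-\alpha_i}{n-1},\frac{nm}{n-1}-\frac{\alpha_i}{n-\alpha_i}\big]$ of the strictly decreasing function $\phi_i(z)=\big(m+\frac{n-1}{n}(1-z)\big)^{\alpha_i}\big(1+\frac{nm}{n-1}-z\big)^{1-\alpha_i}-1$. *)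

theory Defs
  imports Complex_Main
begin

text \<open>Students are indexed by 0, ..., n-1; a strategy profile is a function nat => real
  whose values at indices >= n are irrelevant.\<close>

definition avg :: "nat \<Rightarrow> (nat \<Rightarrow> real) \<Rightarrow> real" where
  "avg n x = (\<Sum>j<n. x j) / real n"

definition grade :: "nat \<Rightarrow> real \<Rightarrow> (nat \<Rightarrow> real) \<Rightarrow> nat \<Rightarrow> real" where
  "grade n m x i = x i + max (m - avg n x) 0"

definition payoff :: "nat \<Rightarrow> real \<Rightarrow> (nat \<Rightarrow> real) \<Rightarrow> (nat \<Rightarrow> real) \<Rightarrow> nat \<Rightarrow> real" where
  "payoff n m \<alpha> x i = (grade n m x i) powr (\<alpha> i) * (1 - x i) powr (1 - \<alpha> i)"

definition is_profile :: "nat \<Rightarrow> (nat \<Rightarrow> real) \<Rightarrow> bool" where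
  "is_profile n x \<longleftrightarrow> (\<forall>i<n. 0 \<le> x i \<and> x i \<le> 1)"

definition pure_NE :: "nat \<Rightarrow> real \<Rightarrow> (nat \<Rightarrow> real) \<Rightarrow> (nat \<Rightarrow> real) \<Rightarrow> bool" where
  "pure_NE n m \<alpha> x \<longleftrightarrow> is_profile n x \<and>
     (\<forall>i<n. \<forall>y. 0 \<le> y \<and> y \<le> 1 \<longrightarrow> payoff n m \<alpha> (x(i := y)) i \<le> payoff n m \<alpha> x i)"

definition no_curve_NE :: "nat \<Rightarrow> real \<Rightarrow> (nat \<Rightarrow> real) \<Rightarrow> (nat \<Rightarrow> real) \<Rightarrow> bool" where
  "no_curve_NE n m \<alpha> x \<longleftrightarrow> pure_NE n m \<alpha> x \<and> avg n x \<ge> m"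

definition phi :: "real \<Rightarrow> nat \<Rightarrow> real \<Rightarrow> real \<Rightarrow> real" where
  "phi a n m z = (m + (real n - 1) / real n * (1 - z)) powr a
                 * (1 + real n * m / (real n - 1) - z) powr (1 - a) - 1"

definition J :: "real \<Rightarrow> nat \<Rightarrow> real \<Rightarrow> real" where
  "J a n m = (THE z. (real n * m - a) / (real n - 1) \<le> z
                   \<and> z \<le> real n * m / (real n - 1) - a / (real n - a)
                   \<and> phi a n m z = 0)"

definition threshold :: "nat \<Rightarrow> real \<Rightarrow> (nat \<Rightarrow> real) \<Rightarrow> real" where
  "threshold n m \<alpha> = Max ((\<lambda>i. (real n - 1) * J (\<alpha> i) n m + \<alpha> i) ` {..<n}) / real n"

end

(*
  Fix a student of ability a and let T be the others' total effort. Where the curve is active the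
  grade is ((n-1)/n) (y - c) with c = (T - nm)/(n-1), so the payoff is
  ((n-1)/n)^a (y - c)^a (1 - y)^(1-a). By weighted AM-GM its supremum over y is
  ((n-1)/n)^a (1 - c) a^a (1-a)^(1-a), attained at y = a + (1-a) c, while a^a (1-a)^(1-a) is what
  playing y = a without curve earns. So playing one's ability is a best response iff
  ((n-1)/n)^a (1 - c) <= 1. Since phi is affine in z after factoring out the power,
  J = 1 + nm/(n-1) - (n/(n-1))^a, and the condition reads (n-1) J + a <= T + a, the sum of all
  abilities. Bernoulli's inequality for real exponents gives nm <= (n-1) J + a <= nm + 1, whence
  the threshold lies in [m, m + 1/n].
*)

theory Submission
  imports Defs "HOL-Analysis.Convex"
begin

definition cobb_douglas_max :: "real \<Rightarrow> real" where
  "cobb_douglas_max a = a powr a * (1 - a) powr (1 - a)"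

lemma cobb_douglas_max_pos: "0 < a \<Longrightarrow> a < 1 \<Longrightarrow> 0 < cobb_douglas_max a"
  by (simp add: cobb_douglas_max_def)

lemma weighted_AM_GM:
  fixes a u v :: real
  assumes "0 \<le> a" "a \<le> 1" "0 \<le> u" "0 \<le> v"
  shows "u powr a * v powr (1 - a) \<le> a * u + (1 - a) * v"
proof (cases "u = 0 \<or> v = 0")
  case True
  then show ?thesis
    using assms by auto
next
  case False
  then show ?thesis
    using assms Youngs_inequality_0 [of a "1 - a" u v] by auto
qed

lemma cobb_douglas_le:
  fixes a u v :: real
  assumes "0 < a" "a < 1" "0 \<le> u" "0 \<le> v"
  shows "u powr a * v powr (1 - a) \<le> cobb_douglas_max a * (u + v)"
proof -
  have "u powr a * v powr (1 - a)
      = cobb_douglas_max a * ((u / a) powr a * (v / (1 - a)) powr (1 - a))"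
    using assms by (simp add: cobb_douglas_max_def powr_divide)
  also have "\<dots> \<le> cobb_douglas_max a * (a * (u / a) + (1 - a) * (v / (1 - a)))"
    using assms by (intro mult_left_mono weighted_AM_GM) (auto simp: cobb_douglas_max_def)
  also have "\<dots> = cobb_douglas_max a * (u + v)"
    using assms by simp
  finally show ?thesis .
qed

lemma cobb_douglas_eq:
  fixes a s :: real
  assumes "0 < a" "a < 1" "0 \<le> s"
  shows "(a * s) powr a * ((1 - a) * s) powr (1 - a) = cobb_douglas_max a * s"
proof -
  have "(a * s) powr a * ((1 - a) * s) powr (1 - a)
      = cobb_douglas_max a * (s powr a * s powr (1 - a))"
    using assms by (simp add: cobb_douglas_max_def powr_mult)
  also have "s powr a * s powr (1 - a) = s"
    using assms by (simp add: powr_add [symmetric])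
  finally show ?thesis .
qed

lemma powr_le_Bernoulli:
  fixes a x :: real
  assumes "0 \<le> a" "a \<le> 1" "0 \<le> x"
  shows "x powr a \<le> 1 + a * (x - 1)"
  using weighted_AM_GM [of a x 1] assms by (simp add: algebra_simps)

lemma ratio_powr_bounds:
  assumes "n \<ge> 2" "0 < a" "a < 1"
  shows "1 + a / (real n - a) \<le> (real n / (real n - 1)) powr a"
    and "(real n / (real n - 1)) powr a \<le> 1 + a / (real n - 1)"
proof -
  have n: "real n - 1 > 0" "real n - a > 0"
    using assms by auto
  have "((real n - 1) / real n) powr a \<le> 1 + a * ((real n - 1) / real n - 1)"
    using assms by (intro powr_le_Bernoulli) auto
  also have "\<dots> = (real n - a) / real n"
    using n by (simp add: field_simps)
  finally have "1 / (real n / (real n - 1)) powr a \<le> (real n - a) / real n"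
    by (simp add: powr_divide)
  then have "real n / (real n - a) \<le> (real n / (real n - 1)) powr a"
    using n by (simp add: field_simps)
  then show "1 + a / (real n - a) \<le> (real n / (real n - 1)) powr a"
    using n by (simp add: field_simps)
  have "(real n / (real n - 1)) powr a \<le> 1 + a * (real n / (real n - 1) - 1)"
    using assms n by (intro powr_le_Bernoulli) auto
  also have "\<dots> = 1 + a / (real n - 1)"
    using n by (simp add: field_simps)
  finally show "(real n / (real n - 1)) powr a \<le> 1 + a / (real n - 1)" .
qed

lemma phi_eq:
  assumes "n \<ge> 2" "z < 1 + real n * m / (real n - 1)"
  shows "phi a n m z = ((real n - 1) / real n) powr a * (1 + real n * m / (real n - 1) - z) - 1"
proof -
  define B where "B = 1 + real n * m / (real n - 1) - z"
  have "B > 0" "real n - 1 > 0"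
    using assms by (auto simp: B_def)
  have "m + (real n - 1) / real n * (1 - z) = (real n - 1) / real n * B"
    using \<open>real n - 1 > 0\<close> by (simp add: B_def field_simps)
  then have "phi a n m z = ((real n - 1) / real n * B) powr a * B powr (1 - a) - 1"
    unfolding phi_def B_def [symmetric] by simp
  also have "((real n - 1) / real n * B) powr a = ((real n - 1) / real n) powr a * B powr a"
    using \<open>B > 0\<close> \<open>real n - 1 > 0\<close> by (intro powr_mult)
  also have "\<dots> * B powr (1 - a) = ((real n - 1) / real n) powr a * (B powr a * B powr (1 - a))"
    by simp
  also have "B powr a * B powr (1 - a) = B"
    using \<open>B > 0\<close> by (simp add: powr_add [symmetric])
  finally show ?thesis
    by (simp add: B_def)
qed

lemma J_eq:
  assumes "n \<ge> 2" "0 < a" "a < 1"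
  shows "J a n m = 1 + real n * m / (real n - 1) - (real n / (real n - 1)) powr a"
proof -
  define r where "r = (real n / (real n - 1)) powr a"
  define z0 where "z0 = 1 + real n * m / (real n - 1) - r"
  have n: "real n - 1 > 0" "real n - a > 0"
    using assms by auto
  have "r > 0" "((real n - 1) / real n) powr a = 1 / r"
    using n by (auto simp: r_def powr_divide)
  have zero_iff: "phi a n m z = 0 \<longleftrightarrow> z = z0"
    if "z \<le> real n * m / (real n - 1) - a / (real n - a)" for z
  proof -
    have "a / (real n - a) > 0"
      using n assms by simp
    then have "phi a n m z = (1 + real n * m / (real n - 1) - z) / r - 1"
      using that by (simp add: phi_eq [OF assms(1)] \<open>_ = 1 / r\<close>)
    then show ?thesis
      using \<open>r > 0\<close> by (auto simp: z0_def divide_eq_1_iff)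
  qed
  have "(real n * m - a) / (real n - 1) \<le> z0"
    "z0 \<le> real n * m / (real n - 1) - a / (real n - a)"
    using ratio_powr_bounds [OF assms] by (auto simp: z0_def r_def diff_divide_distrib)
  then have "J a n m = z0"
    unfolding J_def using zero_iff by (intro the_equality) auto
  then show ?thesis
    by (simp add: z0_def r_def)
qed

lemma scaled_J_bounds:
  assumes "n \<ge> 2" "0 < a" "a < 1"
  shows "real n * m - a \<le> (real n - 1) * J a n m"
    and "(real n - 1) * J a n m \<le> real n * m"
proof -
  define r where "r = (real n / (real n - 1)) powr a"
  have n: "real n - 1 > 0"
    using assms by auto
  have scaled: "(real n - 1) * J a n m = real n * m - (real n - 1) * (r - 1)"
    using n by (simp add: J_eq [OF assms] r_def field_simps)
  have "1 \<le> r"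
    using n assms by (auto simp: r_def intro: ge_one_powr_ge_zero)
  then show "(real n - 1) * J a n m \<le> real n * m"
    using n scaled by simp
  have "(real n - 1) * (r - 1) \<le> a"
    using ratio_powr_bounds(2) [OF assms] n by (simp add: r_def field_simps)
  then show "real n * m - a \<le> (real n - 1) * J a n m"
    using scaled by simp
qed

definition deviation_payoff :: "nat \<Rightarrow> real \<Rightarrow> real \<Rightarrow> real \<Rightarrow> real \<Rightarrow> real" where
  "deviation_payoff n m a others y =
     (y + max (m - (others + y) / real n) 0) powr a * (1 - y) powr (1 - a)"

lemma deviation_payoff_no_curve:
  "real n * m \<le> others + y \<Longrightarrow> real n > 0 \<Longrightarrow>
     deviation_payoff n m a others y = y powr a * (1 - y) powr (1 - a)"
  by (simp add: deviation_payoff_def field_simps)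

lemma deviation_payoff_curve:
  assumes "n \<ge> 2" "0 \<le> y" "others + y < real n * m"
  defines "c \<equiv> (others - real n * m) / (real n - 1)"
  shows "0 < y - c"
    and "deviation_payoff n m a others y
           = ((real n - 1) / real n) powr a * ((y - c) powr a * (1 - y) powr (1 - a))"
proof -
  have n: "real n - 1 > 0"
    using assms by auto
  have grade: "y + (m - (others + y) / real n) = (real n - 1) / real n * (y - c)"
    using n by (simp add: c_def field_simps)
  have "(real n - 1) * (y - c) = real n * y + (real n * m - others - y)"
    using n by (simp add: c_def field_simps)
  then show "0 < y - c"
    using assms n by (smt (verit) mult_nonneg_nonneg of_nat_0_le_iff zero_less_mult_iff)
  have "max (m - (others + y) / real n) 0 = m - (others + y) / real n"
    using assms by (simp add: field_simps)
  then have "deviation_payoff n m a others y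
      = ((real n - 1) / real n * (y - c)) powr a * (1 - y) powr (1 - a)"
    unfolding deviation_payoff_def grade [symmetric] by simp
  also have "((real n - 1) / real n * (y - c)) powr a = ((real n - 1) / real n) powr a * (y - c) powr a"
    using n \<open>0 < y - c\<close> by (intro powr_mult)
  finally show "deviation_payoff n m a others y
           = ((real n - 1) / real n) powr a * ((y - c) powr a * (1 - y) powr (1 - a))"
    by (simp add: mult.assoc)
qed

lemma scaled_J_le_iff:
  assumes "n \<ge> 2" "0 < a" "a < 1"
  shows "(real n - 1) * J a n m \<le> others \<longleftrightarrow>
    ((real n - 1) / real n) powr a * (1 - (others - real n * m) / (real n - 1)) \<le> 1"
proof -
  define r where "r = (real n / (real n - 1)) powr a"
  have n: "real n - 1 > 0"
    using assms by auto
  have "r > 0" "((real n - 1) / real n) powr a = 1 / r"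
    using n by (auto simp: r_def powr_divide)
  moreover have "(real n - 1) * J a n m \<le> others \<longleftrightarrow> J a n m \<le> others / (real n - 1)"
    using n by (simp add: pos_le_divide_eq mult.commute)
  moreover have "\<dots> \<longleftrightarrow> 1 - (others - real n * m) / (real n - 1) \<le> r"
    unfolding J_eq [OF assms] r_def diff_divide_distrib by linarith
  ultimately have "(real n - 1) * J a n m \<le> others \<longleftrightarrow>
      1 - (others - real n * m) / (real n - 1) \<le> r"
    by simp
  with \<open>r > 0\<close> \<open>_ = 1 / r\<close> show ?thesis
    by (simp add: divide_le_eq_1)
qed

lemma deviation_payoff_le_cobb_douglas_max:
  assumes "n \<ge> 2" "0 < a" "a < 1" "(real n - 1) * J a n m \<le> others" "0 \<le> y" "y \<le> 1"
  shows "deviation_payoff n m a others y \<le> cobb_douglas_max a"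
proof (cases "others + y < real n * m")
  case True
  define K where "K = ((real n - 1) / real n) powr a"
  define c where "c = (others - real n * m) / (real n - 1)"
  have "K * (1 - c) \<le> 1"
    using scaled_J_le_iff [OF assms(1-3)] assms(4) by (simp add: K_def c_def)
  have "0 < y - c"
    using deviation_payoff_curve(1) [OF assms(1,5) True] by (simp add: c_def)
  have "K > 0"
    using assms(1) by (simp add: K_def)
  have "deviation_payoff n m a others y = K * ((y - c) powr a * (1 - y) powr (1 - a))"
    using deviation_payoff_curve(2) [OF assms(1,5) True] by (simp add: K_def c_def)
  also have "\<dots> \<le> K * (cobb_douglas_max a * ((y - c) + (1 - y)))"
    using assms \<open>0 < y - c\<close> \<open>K > 0\<close> by (intro mult_left_mono cobb_douglas_le) auto
  also have "\<dots> = cobb_douglas_max a * (K * (1 - c))"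
    by simp
  also have "\<dots> \<le> cobb_douglas_max a"
    using \<open>K * (1 - c) \<le> 1\<close> cobb_douglas_max_pos [OF assms(2,3)] by (simp add: mult_left_le)
  finally show ?thesis .
next
  case False
  then have "deviation_payoff n m a others y = y powr a * (1 - y) powr (1 - a)"
    using assms(1) by (intro deviation_payoff_no_curve) auto
  also have "\<dots> \<le> cobb_douglas_max a * (y + (1 - y))"
    using assms by (intro cobb_douglas_le) auto
  finally show ?thesis
    by simp
qed

lemma exists_profitable_deviation:
  assumes "n \<ge> 2" "0 < a" "a < 1" "real n * m \<le> others + a"
    and "\<not> (real n - 1) * J a n m \<le> others"
  shows "\<exists>y. 0 \<le> y \<and> y \<le> 1 \<and> cobb_douglas_max a < deviation_payoff n m a others y"
proof -
  define K where "K = ((real n - 1) / real n) powr a"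
  define c where "c = (others - real n * m) / (real n - 1)"
  \<comment> \<open>the maximiser of \<open>(y - c) powr a * (1 - y) powr (1 - a)\<close>\<close>
  define y where "y = a + (1 - a) * c"
  have n: "real n - 1 > 0" "real n - a > 0"
    using assms by auto
  have "K > 0" "1 / K = (real n / (real n - 1)) powr a"
    using n by (auto simp: K_def powr_divide)
  have "1 < K * (1 - c)"
    using scaled_J_le_iff [OF assms(1-3)] assms(5) by (simp add: K_def c_def)
  then have "c < 1" "1 / K < 1 - c"
    using \<open>K > 0\<close> zero_less_mult_pos [of K "1 - c"] by (auto simp: pos_divide_less_eq mult.commute)
  then have "c < - a / (real n - a)"
    using ratio_powr_bounds(1) [OF assms(1-3)] \<open>1 / K = _\<close> by linarith
  then have "(real n - a) * c < (real n - a) * (- a / (real n - a))"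
    using n by (intro mult_strict_left_mono) auto
  then have c_upper: "(real n - a) * c < - a"
    using n by simp
  have "- a \<le> (real n - 1) * c"
    using assms(4) n by (simp add: c_def)
  have "- a \<le> (1 - a) * c"
  proof (cases "0 \<le> c")
    case True
    then show ?thesis
      using assms(2,3) by (smt (verit) mult_nonneg_nonneg)
  next
    case False
    then have "(real n - 1) * c \<le> (1 - a) * c"
      using assms(1,2) by (intro mult_right_mono_neg) auto
    then show ?thesis
      using \<open>- a \<le> (real n - 1) * c\<close> by linarith
  qed
  moreover have "0 \<le> (1 - a) * (1 - c)"
    using \<open>c < 1\<close> assms(3) by simp
  ultimately have y_range: "0 \<le> y" "y \<le> 1"
    by (simp_all add: y_def algebra_simps)
  have "others + y = real n * m + ((real n - a) * c + a)"
    using n by (simp add: y_def c_def field_simps)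
  then have curve: "others + y < real n * m"
    using c_upper by simp
  have "deviation_payoff n m a others y = K * ((y - c) powr a * (1 - y) powr (1 - a))"
    using deviation_payoff_curve(2) [OF assms(1) y_range(1) curve] by (simp add: K_def c_def)
  also have "(y - c) powr a * (1 - y) powr (1 - a)
      = (a * (1 - c)) powr a * ((1 - a) * (1 - c)) powr (1 - a)"
    by (simp add: y_def algebra_simps)
  also have "\<dots> = cobb_douglas_max a * (1 - c)"
    using assms \<open>c < 1\<close> by (intro cobb_douglas_eq) auto
  finally have "deviation_payoff n m a others y = cobb_douglas_max a * (K * (1 - c))"
    by simp
  moreover have "cobb_douglas_max a < cobb_douglas_max a * (K * (1 - c))"
    using \<open>1 < K * (1 - c)\<close> cobb_douglas_max_pos [OF assms(2,3)] by simp
  ultimately show ?thesis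
    using y_range by auto
qed

lemma own_ability_best_response_iff:
  assumes "n \<ge> 2" "0 < a" "a < 1" "real n * m \<le> others + a"
  shows "(\<forall>y. 0 \<le> y \<and> y \<le> 1 \<longrightarrow>
            deviation_payoff n m a others y \<le> deviation_payoff n m a others a)
         \<longleftrightarrow> (real n - 1) * J a n m \<le> others"
proof -
  have "deviation_payoff n m a others a = cobb_douglas_max a"
    using assms by (simp add: deviation_payoff_no_curve cobb_douglas_max_def)
  then show ?thesis
    using deviation_payoff_le_cobb_douglas_max [OF assms(1-3)]
      exists_profitable_deviation [OF assms] by force
qed

lemma sum_fun_upd:
  fixes f :: "'a \<Rightarrow> 'b::ab_group_add"
  assumes "finite A" "i \<in> A"
  shows "sum (f(i := y)) A = sum f A - f i + y"
proof -
  have "sum (f(i := y)) A = (f(i := y)) i + sum (f(i := y)) (A - {i})"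
    by (rule sum.remove [OF assms])
  also have "sum (f(i := y)) (A - {i}) = sum f (A - {i})"
    by (rule sum.cong) auto
  also have "\<dots> = sum f A - f i"
    using sum.remove [OF assms, of f] by simp
  finally show ?thesis
    by simp
qed

lemma payoff_deviation:
  assumes "i < n" "\<forall>j<n. x j = \<alpha> j"
  shows "payoff n m \<alpha> (x(i := y)) i = deviation_payoff n m (\<alpha> i) ((\<Sum>j<n. \<alpha> j) - \<alpha> i) y"
proof -
  have "(\<Sum>j<n. x j) = (\<Sum>j<n. \<alpha> j)"
    using assms by (intro sum.cong) auto
  then show ?thesis
    using assms sum_fun_upd [of "{..<n}" i x y]
    by (simp add: payoff_def grade_def avg_def deviation_payoff_def add.commute)
qed

lemma no_curve_NE_at_abilities_iff:
  assumes "n \<ge> 2" "\<forall>i<n. 0 < \<alpha> i \<and> \<alpha> i < 1" "\<forall>i<n. x i = \<alpha> i"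
  shows "no_curve_NE n m \<alpha> x \<longleftrightarrow>
    (\<forall>i<n. (real n - 1) * J (\<alpha> i) n m + \<alpha> i \<le> (\<Sum>j<n. \<alpha> j))"
    (is "_ \<longleftrightarrow> (\<forall>i<n. ?E i \<le> ?S)")
proof -
  have avg: "m \<le> avg n x \<longleftrightarrow> real n * m \<le> ?S"
    using assms by (simp add: avg_def pos_le_divide_eq mult.commute)
  have best_response: "(\<forall>y. 0 \<le> y \<and> y \<le> 1 \<longrightarrow> payoff n m \<alpha> (x(i := y)) i \<le> payoff n m \<alpha> x i)
      \<longleftrightarrow> ?E i \<le> ?S" if "i < n" "real n * m \<le> ?S" for i
  proof -
    have "x(i := \<alpha> i) = x"
      using assms \<open>i < n\<close> by auto
    then have "payoff n m \<alpha> x i = deviation_payoff n m (\<alpha> i) (?S - \<alpha> i) (\<alpha> i)"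
      using payoff_deviation [OF \<open>i < n\<close> assms(3), of m "\<alpha> i"] by simp
    then show ?thesis
      using own_ability_best_response_iff [of n "\<alpha> i" m "?S - \<alpha> i"]
        payoff_deviation [OF \<open>i < n\<close> assms(3)] assms that by auto
  qed
  have "real n * m \<le> ?S" if "\<forall>i<n. ?E i \<le> ?S"
    using that [rule_format, of 0] scaled_J_bounds(1) [of n "\<alpha> 0" m] assms by auto
  then show ?thesis
    using assms best_response avg
    by (auto simp: no_curve_NE_def pure_NE_def is_profile_def)
qed

lemma threshold_le_avg_iff:
  assumes "n > 0"
  shows "threshold n m \<alpha> \<le> avg n \<alpha> \<longleftrightarrow>
    (\<forall>i<n. (real n - 1) * J (\<alpha> i) n m + \<alpha> i \<le> (\<Sum>j<n. \<alpha> j))"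
  using assms by (simp add: threshold_def avg_def divide_le_cancel Max_le_iff lessThan_empty_iff) auto

lemma threshold_bounds:
  assumes "n \<ge> 2" "\<forall>i<n. 0 < \<beta> i \<and> \<beta> i < 1"
  shows "m \<le> threshold n m \<beta>" and "threshold n m \<beta> \<le> m + 1 / real n"
proof -
  define E where "E i = (real n - 1) * J (\<beta> i) n m + \<beta> i" for i
  have E: "real n * m \<le> E i" "E i \<le> real n * m + 1" if "i < n" for i
    using scaled_J_bounds [of n "\<beta> i" m] assms that by (auto simp: E_def)
  have "finite (E ` {..<n})" "E ` {..<n} \<noteq> {}"
    using assms by (auto simp: lessThan_empty_iff)
  then have Max: "real n * m \<le> Max (E ` {..<n})" "Max (E ` {..<n}) \<le> real n * m + 1"
    using E [of 0] E assms(1) by (auto simp: Max_ge_iff Max_le_iff)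
  have threshold: "threshold n m \<beta> = Max (E ` {..<n}) / real n"
    by (simp add: threshold_def E_def)
  show "m \<le> threshold n m \<beta>"
    using Max(1) assms(1) by (simp add: threshold pos_le_divide_eq mult.commute)
  have "Max (E ` {..<n}) / real n \<le> (real n * m + 1) / real n"
    using Max(2) by (rule divide_right_mono) simp
  then show "threshold n m \<beta> \<le> m + 1 / real n"
    using assms(1) by (simp add: threshold add_divide_distrib)
qed

lemma threshold_tendsto:
  assumes "\<forall>i. 0 < \<beta> i \<and> \<beta> i < 1"
  shows "(\<lambda>n. threshold n m \<beta>) \<longlonglongrightarrow> m"
proof (rule tendsto_sandwich [of "\<lambda>_. m" _ _ "\<lambda>n. m + 1 / real n"])
  show "\<forall>\<^sub>F n in sequentially. m \<le> threshold n m \<beta>"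
    "\<forall>\<^sub>F n in sequentially. threshold n m \<beta> \<le> m + 1 / real n"
    using eventually_ge_at_top [of 2] by (eventually_elim, use threshold_bounds assms in auto)+
  show "(\<lambda>n. m + 1 / real n) \<longlonglongrightarrow> m"
    using tendsto_add [OF tendsto_const lim_1_over_n, of m] by simp
qed simp

theorem mainTheorem11:
  fixes n :: nat and m :: real and \<alpha> :: "nat \<Rightarrow> real"
  assumes "n \<ge> 2" and "0 < m" and "m < 1"
    and "\<forall>i<n. 0 < \<alpha> i \<and> \<alpha> i < 1"
  shows "((\<exists>x. no_curve_NE n m \<alpha> x \<and> (\<forall>i<n. x i = \<alpha> i))
            \<longleftrightarrow> avg n \<alpha> \<ge> threshold n m \<alpha>)
         \<and> (\<forall>\<beta> :: nat \<Rightarrow> real. (\<forall>i. 0 < \<beta> i \<and> \<beta> i < 1) \<longrightarrow>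
              (\<lambda>N. threshold N m \<beta>) \<longlonglongrightarrow> m)"
proof (intro conjI allI impI)
  have "(\<exists>x. no_curve_NE n m \<alpha> x \<and> (\<forall>i<n. x i = \<alpha> i)) \<longleftrightarrow> no_curve_NE n m \<alpha> \<alpha>"
    using no_curve_NE_at_abilities_iff [OF assms(1,4)] by blast
  also have "\<dots> \<longleftrightarrow> threshold n m \<alpha> \<le> avg n \<alpha>"
    using no_curve_NE_at_abilities_iff [OF assms(1,4)] threshold_le_avg_iff assms(1) by simp
  finally show "(\<exists>x. no_curve_NE n m \<alpha> x \<and> (\<forall>i<n. x i = \<alpha> i)) \<longleftrightarrow> avg n \<alpha> \<ge> threshold n m \<alpha>" .
qed (rule threshold_tendsto)

end
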